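(* Let $\mathcal{T}=(X,A,Z,(f_n))$ be a mapping tuple, fix a compatible metric on $Z$, let $d\in\omega$ and $(u,(V_x)_{x\in X})\in U_{\mathcal{T}}$. Then there is a family $(W_x)_{x\in X}$ of subsets of $Z$ such that (a) $(u,(W_x)_{x\in X})\in E_{\mathcal{T}}$; (b) for each $x\in X$, $W_x\subseteq V_x$, $W_x$ is clopen and $\mathrm{diam}(W_x)\le 2^{-d}$; (c) $W_x\cap W_y=\emptyset$ for $x\ne y$ in $X$.
   Context: An oriented graph on $X$ is an irreflexive $A\subseteq X^2$ with $A\cap A^{-1}=\emptyset$; $s(A)=A\cup A^{-1}$; $\mathrm{Succ}(x)=\{y:(x,y)\in A\}$. $A$ is an uogas if it is an oriented graph, $|\mathrm{Succ}(x)|\le1$ for all $x$, and $s(A)$ is acyclic (no injective $s(A)$-path $(x_i)_{i\le n}$, $n\ge2$, with $(x_n,x_0)\in s(A)$). A strongly complex situation is $(Z,(f_n)_{n\in\omega})$ with $Z$ a nonempty zero-dimensional perfect Polish space, each $f_n$ a partial continuous open map on $Z$ with clopen domain $D_n$ and clopen range, $\Delta(Z)\subseteq\overline{\bigcup_n\mathrm{Graph}(f_n)}\setminus\bigcup_n\mathrm{Graph}(f_n)$, and the restriction of any $f_n$ to any nonempty open subset of $D_n$ not countable-to-one. A mapping tuple is $\mathcal{T}=(X,A,Z,(f_n))$ with $A$ an uogas on a finite set $X$ and $(Z,(f_n))$ a strongly complex situation. $E_{\mathcal{T}}$ (resp. $U_{\mathcal{T}}$) is the set of pairs $(u,(V_x)_{x\in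 X})$ with $u\in\omega^X$ and each $V_x$ a nonempty open subset of $Z$ such that for all $(x,y)\in A$: $V_x\subseteq D_{u(x)}$ and $V_y=f_{u(x)}[V_x]$ (resp. $V_y\subseteq f_{u(x)}[V_x]$). *)

theory Defs
  imports "HOL-Analysis.Analysis"
begin

definition symm_rel :: "('b \<times> 'b) set \<Rightarrow> ('b \<times> 'b) set" where
  "symm_rel A = A \<union> A\<inverse>"

definition oriented_graph :: "'b set \<Rightarrow> ('b \<times> 'b) set \<Rightarrow> bool" where
  "oriented_graph X A \<longleftrightarrow> A \<subseteq> X \<times> X \<and> (\<forall>x. (x, x) \<notin> A) \<and> A \<inter> A\<inverse> = {}"

definition Succ :: "('b \<times> 'b) set \<Rightarrow> 'b \<Rightarrow> 'b set" where
  "Succ A x = {y. (x, y) \<in> A}"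

definition s_acyclic :: "('b \<times> 'b) set \<Rightarrow> bool" where
  "s_acyclic A \<longleftrightarrow> \<not> (\<exists>(p :: nat \<Rightarrow> 'b) n. 2 \<le> n \<and> inj_on p {..n} \<and>
       (\<forall>i<n. (p i, p (Suc i)) \<in> symm_rel A) \<and> (p n, p 0) \<in> symm_rel A)"

definition uogas :: "'b set \<Rightarrow> ('b \<times> 'b) set \<Rightarrow> bool" where
  "uogas X A \<longleftrightarrow> oriented_graph X A \<and> (\<forall>x. card (Succ A x) \<le> 1 \<and> finite (Succ A x))
                 \<and> s_acyclic A"

definition clopenin :: "'a topology \<Rightarrow> 'a set \<Rightarrow> bool" where
  "clopenin T S \<longleftrightarrow> openin T S \<and> closedin T S"

definition pgraph :: "'a set \<Rightarrow> ('a \<Rightarrow> 'a) \<Rightarrow> ('a \<times> 'a) set" where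
  "pgraph D f = {(z, f z) | z. z \<in> D}"

text \<open>Strongly complex situation (Z,(f_n)) where f_n has domain D_n.  Z is a subset of a
  metric space type, with the subspace topology; the ambient metric restricted to Z
  is the fixed compatible metric.\<close>
definition strongly_complex_situation ::
    "'a::metric_space set \<Rightarrow> (nat \<Rightarrow> 'a set) \<Rightarrow> (nat \<Rightarrow> 'a \<Rightarrow> 'a) \<Rightarrow> bool" where
  "strongly_complex_situation Z D f \<longleftrightarrow>
     Z \<noteq> {} \<and>
     (top_of_set Z) dim_le 0 \<and>
     Z \<subseteq> (top_of_set Z) derived_set_of Z \<and>
     completely_metrizable_space (top_of_set Z) \<and> separable_space (top_of_set Z) \<and>
     (\<forall>n. clopenin (top_of_set Z) (D n) \<and>
          continuous_map (subtopology (top_of_set Z) (D n)) (top_of_set Z) (f n) \<and>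
          open_map (subtopology (top_of_set Z) (D n)) (top_of_set Z) (f n) \<and>
          clopenin (top_of_set Z) (f n ` D n)) \<and>
     (\<forall>z\<in>Z. (z, z) \<in> closure (\<Union>n. pgraph (D n) (f n)) \<and>
             (z, z) \<notin> (\<Union>n. pgraph (D n) (f n))) \<and>
     (\<forall>n V. openin (top_of_set Z) V \<and> V \<noteq> {} \<and> V \<subseteq> D n \<longrightarrow>
            \<not> (\<forall>w. countable ({z\<in>V. f n z = w})))"

definition mapping_tuple ::
    "'b set \<Rightarrow> ('b \<times> 'b) set \<Rightarrow> 'a::metric_space set \<Rightarrow> (nat \<Rightarrow> 'a set) \<Rightarrow> (nat \<Rightarrow> 'a \<Rightarrow> 'a) \<Rightarrow> bool" where
  "mapping_tuple X A Z D f \<longleftrightarrow> finite X \<and> uogas X A \<and> strongly_complex_situation Z D f"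

definition E_T ::
    "'b set \<Rightarrow> ('b \<times> 'b) set \<Rightarrow> 'a::metric_space set \<Rightarrow> (nat \<Rightarrow> 'a set) \<Rightarrow> (nat \<Rightarrow> 'a \<Rightarrow> 'a)
     \<Rightarrow> (('b \<Rightarrow> nat) \<times> ('b \<Rightarrow> 'a set)) set" where
  "E_T X A Z D f = {(u, V) | u V.
      (\<forall>x\<in>X. openin (top_of_set Z) (V x) \<and> V x \<noteq> {}) \<and>
      (\<forall>(x, y)\<in>A. V x \<subseteq> D (u x) \<and> V y = f (u x) ` V x)}"

definition U_T ::
    "'b set \<Rightarrow> ('b \<times> 'b) set \<Rightarrow> 'a::metric_space set \<Rightarrow> (nat \<Rightarrow> 'a set) \<Rightarrow> (nat \<Rightarrow> 'a \<Rightarrow> 'a)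
     \<Rightarrow> (('b \<Rightarrow> nat) \<times> ('b \<Rightarrow> 'a set)) set" where
  "U_T X A Z D f = {(u, V) | u V.
      (\<forall>x\<in>X. openin (top_of_set Z) (V x) \<and> V x \<noteq> {}) \<and>
      (\<forall>(x, y)\<in>A. V x \<subseteq> D (u x) \<and> V y \<subseteq> f (u x) ` V x)}"

end

theory Submission
  imports Defs "HOL-Library.Transitive_Closure_Table"
begin

(* A uogas on a finite set is a forest whose edges point from a vertex to its unique successor,
   so everything below is proved by removing a vertex without predecessors (a leaf).  Pulling back
   along the edge leaving the leaf turns a U-family into an E-family and allows an E-family to be
   shrunk at any prescribed vertex.  Since the maps are nowhere countable-to-one and Z is perfect,
   every point of a suitable open set has arbitrarily many preimages in the set at the leaf, so an
   induction produces an injective thread: points z x \<in> W x with f (u x) (z x) = z y along every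
   edge.  Around the distinct points z x, zero-dimensionality provides clopen neighbourhoods inside
   small disjoint balls, and one more leaf induction makes them an E-family. *)

lemma oriented_graph_s_acyclic_imp_acyclic:
  assumes og: "oriented_graph X A" and sa: "s_acyclic A"
  shows "acyclic A"
proof (rule acyclicI, rule allI, rule notI)
  fix x assume "(x, x) \<in> A\<^sup>+"
  then obtain y where xy: "(x, y) \<in> A" and "(y, x) \<in> A\<^sup>*"
    by (meson tranclD)
  then obtain ys where "rtrancl_path (\<lambda>a b. (a, b) \<in> A) y ys x"
    using rtranclp_eq_rtrancl_path[of "\<lambda>a b. (a, b) \<in> A"] by (auto simp: rtrancl_def)
  (* A repetition-free path from y back to x, closed by the edge (x, y), is an injective cycle. *)
  then obtain zs where zs: "rtrancl_path (\<lambda>a b. (a, b) \<in> A) y zs x" "distinct (y # zs)"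
    by (rule rtrancl_path_distinct)
  define p where "p i = (y # zs) ! i" for i
  define n where "n = length zs"
  have "last (y # zs) = x"
    using zs(1) rtrancl_path_last[OF zs(1)] by (cases zs) (auto elim: rtrancl_path.cases)
  then have last: "p n = x" by (simp add: p_def n_def last_conv_nth[of "y # zs", simplified])
  have edges: "(p i, p (Suc i)) \<in> A" if "i < n" for i
    using rtrancl_path_nth[OF zs(1)] that by (simp add: p_def n_def)
  have "inj_on p {..n}"
    using zs(2) by (auto simp: inj_on_def p_def n_def distinct_conv_nth less_Suc_eq_le)
  moreover have "2 \<le> n"
  proof -
    have "n \<noteq> 0" using last og xy by (auto simp: p_def oriented_graph_def)
    moreover have "n \<noteq> 1" using last edges[of 0] og xy by (auto simp: p_def oriented_graph_def)
    ultimately show ?thesis by linarith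
  qed
  moreover have "(p n, p 0) \<in> symm_rel A" using last xy by (simp add: p_def symm_rel_def)
  ultimately show False
    using sa edges unfolding s_acyclic_def symm_rel_def by blast
qed

lemma dim_le_0_clopen_neighbourhood:
  assumes "T dim_le 0" "openin T U" "x \<in> U"
  obtains C where "closedin T C" "openin T C" "x \<in> C" "C \<subseteq> U"
  using assms
  by (force simp: dimension_le_0_neighbourhood_base_of_clopen open_neighbourhood_base_of)

lemma perfect_openin_infinite:
  assumes "Hausdorff_space T" "topspace T \<subseteq> T derived_set_of topspace T"
    and "openin T S" "S \<noteq> {}"
  shows "infinite S"
proof -
  obtain x where x: "x \<in> S" using assms(4) by blast
  have "x \<in> T derived_set_of topspace T" using assms(2,3) x openin_subset by blast
  then have "infinite (topspace T \<inter> S)"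
    using derived_set_of_infinite_openin[OF assms(1)] x assms(3) by blast
  moreover have "topspace T \<inter> S = S" using openin_subset[OF assms(3)] by blast
  ultimately show ?thesis by simp
qed

lemma finite_disjoint_balls:
  fixes B :: "'a::metric_space set"
  assumes "finite B"
  obtains \<delta> where "\<delta> > 0" "\<And>b b'. b \<in> B \<Longrightarrow> b' \<in> B \<Longrightarrow> b \<noteq> b' \<Longrightarrow> ball b \<delta> \<inter> ball b' \<delta> = {}"
proof -
  define \<Delta> where "\<Delta> = insert 1 ((\<lambda>(b, b'). dist b b' / 2) ` {p \<in> B \<times> B. fst p \<noteq> snd p})"
  have fin: "finite \<Delta>" using assms by (simp add: \<Delta>_def)
  have "Min \<Delta> > 0" using fin by (auto simp: \<Delta>_def Min_gr_iff)
  moreover have "ball b (Min \<Delta>) \<inter> ball b' (Min \<Delta>) = {}"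
    if "b \<in> B" "b' \<in> B" "b \<noteq> b'" for b b'
  proof (rule equals0I)
    fix x assume "x \<in> ball b (Min \<Delta>) \<inter> ball b' (Min \<Delta>)"
    then have "dist b x < Min \<Delta>" "dist b' x < Min \<Delta>" by auto
    moreover have "dist b b' / 2 \<in> \<Delta>"
      using that unfolding \<Delta>_def by (intro insertI2 image_eqI[of _ _ "(b, b')"]) auto
    then have "Min \<Delta> \<le> dist b b' / 2" by (rule Min_le[OF fin])
    moreover have "dist b b' \<le> dist b x + dist b' x" by (rule dist_triangle2)
    ultimately show False by linarith
  qed
  ultimately show thesis using that by blast
qed

lemma card_outside_union_image:
  assumes "finite F" "finite K" "card F + card K < card T"
  obtains a where "a \<in> T" "a \<notin> F" "a \<notin> g ` K"
proof -
  have "card (F \<union> g ` K) \<le> card F + card K"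
    using card_Un_le[of F "g ` K"] card_image_le[OF assms(2), of g] by linarith
  then have "\<not> T \<subseteq> F \<union> g ` K"
    using assms card_mono[of "F \<union> g ` K" T] by auto
  then show thesis using that by blast
qed

definition forest :: "'b set \<Rightarrow> ('b \<times> 'b) set \<Rightarrow> bool" where
  "forest X A \<longleftrightarrow> finite X \<and> A \<subseteq> X \<times> X \<and> single_valued A \<and> acyclic A"

lemma uogas_imp_forest:
  assumes "finite X" "uogas X A"
  shows "forest X A"
proof -
  have "single_valued A"
  proof (rule single_valuedI)
    fix x y y' assume "(x, y) \<in> A" "(x, y') \<in> A"
    moreover have "card (Succ A x) \<le> 1" "finite (Succ A x)"
      using assms(2) by (auto simp: uogas_def)
    ultimately show "y = y'" by (auto simp: Succ_def card_le_Suc0_iff_eq)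
  qed
  then show ?thesis
    using assms oriented_graph_s_acyclic_imp_acyclic
    by (auto simp: forest_def uogas_def oriented_graph_def)
qed

lemma forest_edge_in:
  assumes "forest X A" "(x, y) \<in> A"
  shows "x \<in> X" "y \<in> X" "x \<noteq> y"
proof -
  show "x \<in> X" "y \<in> X" using assms by (auto simp: forest_def)
  have "irrefl (A\<^sup>+)" using assms(1) by (simp add: forest_def acyclic_irrefl)
  then show "x \<noteq> y" using assms(2) by (auto simp: irrefl_def)
qed

lemma forest_remove_vertex:
  "forest X A \<Longrightarrow> forest (X - {l}) (Restr A (X - {l}))"
  unfolding forest_def
  by (meson Int_lower1 acyclic_subset single_valued_subset finite_Diff mem_Sigma_iff subset_iff IntD2)

lemma forest_has_leaf:
  assumes "forest X A" "X \<noteq> {}"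
  obtains l where "l \<in> X" "\<forall>c. (c, l) \<notin> A"
proof -
  have "finite A" using assms(1) by (auto simp: forest_def intro: finite_subset)
  then have "wf A" using assms(1) by (auto simp: forest_def intro: finite_acyclic_wf)
  then obtain l where "l \<in> X" "\<And>c. (c, l) \<in> A \<Longrightarrow> c \<notin> X"
    using wfE_min'[OF _ assms(2)] by blast
  then show thesis using that assms(1) by (auto simp: forest_def)
qed

lemma forest_leaf_induct [consumes 1, case_names empty leaf]:
  assumes "forest X A"
    and empty: "P {} {}"
    and leaf: "\<And>X A l. forest X A \<Longrightarrow> l \<in> X \<Longrightarrow> \<forall>c. (c, l) \<notin> A \<Longrightarrow>
        P (X - {l}) (Restr A (X - {l})) \<Longrightarrow> P X A"
  shows "P X A"
  using assms(1)
proof (induction "card X" arbitrary: X A)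
  case 0
  then show ?case using empty by (auto simp: forest_def)
next
  case (Suc n)
  then have "X \<noteq> {}" by auto
  then obtain l where l: "l \<in> X" "\<forall>c. (c, l) \<notin> A"
    using Suc.prems forest_has_leaf by blast
  have "card (X - {l}) = n"
    using Suc.hyps(2) Suc.prems l(1) by (simp add: forest_def)
  then have "P (X - {l}) (Restr A (X - {l}))"
    using Suc.hyps(1) forest_remove_vertex[OF Suc.prems] by blast
  then show ?case by (rule leaf[OF Suc.prems l])
qed

lemma E_T_vertex:
  "(u, W) \<in> E_T X A Z D f \<Longrightarrow> x \<in> X \<Longrightarrow> openin (top_of_set Z) (W x) \<and> W x \<noteq> {}"
  by (simp add: E_T_def)

lemma E_T_edge:
  "(u, W) \<in> E_T X A Z D f \<Longrightarrow> (x, y) \<in> A \<Longrightarrow> W x \<subseteq> D (u x) \<and> W y = f (u x) ` W x"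
  unfolding E_T_def by fast

lemma U_T_vertex:
  "(u, V) \<in> U_T X A Z D f \<Longrightarrow> x \<in> X \<Longrightarrow> openin (top_of_set Z) (V x) \<and> V x \<noteq> {}"
  by (simp add: U_T_def)

lemma U_T_edge:
  "(u, V) \<in> U_T X A Z D f \<Longrightarrow> (x, y) \<in> A \<Longrightarrow> V x \<subseteq> D (u x) \<and> V y \<subseteq> f (u x) ` V x"
  unfolding U_T_def by fast

lemma E_T_subgraph:
  "(u, W) \<in> E_T X A Z D f \<Longrightarrow> X' \<subseteq> X \<Longrightarrow> A' \<subseteq> A \<Longrightarrow> (u, W) \<in> E_T X' A' Z D f"
  unfolding E_T_def by (simp add: subset_iff) fast

lemma U_T_subgraph:
  "(u, V) \<in> U_T X A Z D f \<Longrightarrow> X' \<subseteq> X \<Longrightarrow> A' \<subseteq> A \<Longrightarrow> (u, V) \<in> U_T X' A' Z D f"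
  unfolding U_T_def by (simp add: subset_iff) fast

definition pullback_at ::
    "('b \<times> 'b) set \<Rightarrow> (nat \<Rightarrow> 'a \<Rightarrow> 'a) \<Rightarrow> ('b \<Rightarrow> nat) \<Rightarrow> ('b \<Rightarrow> 'a set) \<Rightarrow> 'b \<Rightarrow> 'a set \<Rightarrow> 'a set"
  where "pullback_at A f u W l T = {a \<in> T. \<forall>q. (l, q) \<in> A \<longrightarrow> f (u l) a \<in> W q}"

lemma pullback_at_no_successor:
  "\<forall>q. (l, q) \<notin> A \<Longrightarrow> pullback_at A f u W l T = T"
  by (simp add: pullback_at_def)

lemma pullback_at_successor:
  assumes "single_valued A" "(l, q) \<in> A" "T \<subseteq> D (u l)"
  shows "pullback_at A f u W l T = T \<inter> {a \<in> D (u l). f (u l) a \<in> W q}"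
proof -
  have "(l, q') \<in> A \<longleftrightarrow> q' = q" for q'
    using assms(1,2) single_valuedD by fastforce
  then show ?thesis using assms(3) by (auto simp: pullback_at_def)
qed

definition thread ::
    "'b set \<Rightarrow> ('b \<times> 'b) set \<Rightarrow> (nat \<Rightarrow> 'a \<Rightarrow> 'a) \<Rightarrow> ('b \<Rightarrow> nat) \<Rightarrow> ('b \<Rightarrow> 'a set) \<Rightarrow> ('b \<Rightarrow> 'a) \<Rightarrow> bool"
  where "thread X A f u W z \<longleftrightarrow> (\<forall>x\<in>X. z x \<in> W x) \<and> (\<forall>(x, y)\<in>A. f (u x) (z x) = z y)"

lemma thread_mono:
  "thread X A f u W z \<Longrightarrow> (\<And>x. x \<in> X \<Longrightarrow> W x \<subseteq> W' x) \<Longrightarrow> thread X A f u W' z"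
  unfolding thread_def by blast

lemma injective_thread_extend_at_leaf:
  assumes fo: "forest X A" and l: "l \<in> X" "\<forall>c. (c, l) \<notin> A"
    and z: "thread (X - {l}) (Restr A (X - {l})) f u W z" "inj_on z (X - {l})"
      "z ` (X - {l}) \<inter> F = {}"
    and a: "a \<in> W l" "a \<notin> F" "a \<notin> z ` (X - {l})"
    and a_succ: "\<And>q. (l, q) \<in> A \<Longrightarrow> f (u l) a = z q"
  shows "thread X A f u W (z(l := a)) \<and> inj_on (z(l := a)) X \<and> (z(l := a)) ` X \<inter> F = {}"
proof -
  have "f (u x) (z x) = z y" if xy: "(x, y) \<in> A" "x \<noteq> l" for x y
  proof -
    have "(x, y) \<in> Restr A (X - {l})" using xy forest_edge_in[OF fo xy(1)] l(2) by blast
    then show ?thesis using z(1) unfolding thread_def by blast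
  qed
  then have "thread X A f u W (z(l := a))"
    using z(1) a(1) a_succ l(2) by (auto simp: thread_def)
  moreover have "inj_on (z(l := a)) X"
  proof -
    have "(z(l := a)) ` (X - {l} - {l}) = z ` (X - {l})" by auto
    then have "inj_on (z(l := a)) (insert l (X - {l}))"
      using inj_on_fun_updI[OF z(2) a(3)] a(3) by (simp only: inj_on_insert) simp
    then show ?thesis by (simp only: insert_Diff[OF l(1)])
  qed
  moreover have "(z(l := a)) ` X \<inter> F = {}"
  proof -
    have "(z(l := a)) ` insert l (X - {l}) \<inter> F = {}" using z(3) a(2) by auto
    then show ?thesis by (simp only: insert_Diff[OF l(1)])
  qed
  ultimately show ?thesis by blast
qed

locale open_partial_maps =
  fixes Z :: "'a::metric_space set" and D :: "nat \<Rightarrow> 'a set" and f :: "nat \<Rightarrow> 'a \<Rightarrow> 'a"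
  assumes clopen_domain: "clopenin (top_of_set Z) (D n)"
    and continuous_on_domain: "continuous_map (subtopology (top_of_set Z) (D n)) (top_of_set Z) (f n)"
    and open_map_on_domain: "open_map (subtopology (top_of_set Z) (D n)) (top_of_set Z) (f n)"
begin

lemma topspace_domain: "topspace (subtopology (top_of_set Z) (D n)) = D n"
proof -
  have "D n \<subseteq> Z"
    using clopen_domain[of n] closedin_subset by (fastforce simp: clopenin_def)
  then show ?thesis by auto
qed

lemma openin_preimage:
  assumes "openin (top_of_set Z) W"
  shows "openin (top_of_set Z) {a \<in> D n. f n a \<in> W}"
proof (rule openin_trans_full)
  show "openin (subtopology (top_of_set Z) (D n)) {a \<in> D n. f n a \<in> W}"
    using openin_continuous_map_preimage[OF continuous_on_domain assms]
    by (simp only: topspace_domain)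
  show "openin (top_of_set Z) (D n)"
    using clopen_domain by (simp add: clopenin_def)
qed

lemma closedin_preimage:
  assumes "closedin (top_of_set Z) W"
  shows "closedin (top_of_set Z) {a \<in> D n. f n a \<in> W}"
proof (rule closedin_trans_full)
  show "closedin (subtopology (top_of_set Z) (D n)) {a \<in> D n. f n a \<in> W}"
    using closedin_continuous_map_preimage[OF continuous_on_domain assms]
    by (simp only: topspace_domain)
  show "closedin (top_of_set Z) (D n)"
    using clopen_domain by (simp add: clopenin_def)
qed

lemma openin_image:
  assumes "openin (top_of_set Z) S" "S \<subseteq> D n"
  shows "openin (top_of_set Z) (f n ` S)"
proof -
  have "openin (subtopology (top_of_set Z) (D n)) S"
    using openin_subtopology_Int[OF assms(1), of "D n"] assms(2) by (simp add: Int_absorb2)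
  then show ?thesis using open_map_on_domain by (auto simp: open_map_def)
qed

lemma openin_pullback_at:
  assumes "single_valued A" "openin (top_of_set Z) T"
    and "\<And>q. (l, q) \<in> A \<Longrightarrow> T \<subseteq> D (u l) \<and> openin (top_of_set Z) (W q)"
  shows "openin (top_of_set Z) (pullback_at A f u W l T)"
proof (cases "\<exists>q. (l, q) \<in> A")
  case True
  then obtain q where q: "(l, q) \<in> A" by blast
  from assms(3)[OF q] have "T \<subseteq> D (u l)" "openin (top_of_set Z) (W q)" by auto
  then show ?thesis
    using assms(2) by (simp add: pullback_at_successor[OF assms(1) q] openin_Int openin_preimage)
qed (use assms(2) in \<open>simp add: pullback_at_no_successor\<close>)

lemma closedin_pullback_at:
  assumes "single_valued A" "closedin (top_of_set Z) T"
    and "\<And>q. (l, q) \<in> A \<Longrightarrow> T \<subseteq> D (u l) \<and> closedin (top_of_set Z) (W q)"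
  shows "closedin (top_of_set Z) (pullback_at A f u W l T)"
proof (cases "\<exists>q. (l, q) \<in> A")
  case True
  then obtain q where q: "(l, q) \<in> A" by blast
  from assms(3)[OF q] have "T \<subseteq> D (u l)" "closedin (top_of_set Z) (W q)" by auto
  then show ?thesis
    using assms(2) by (simp add: pullback_at_successor[OF assms(1) q] closedin_Int closedin_preimage)
qed (use assms(2) in \<open>simp add: pullback_at_no_successor\<close>)

lemma E_T_extend_at_leaf:
  assumes fo: "forest X A" and l: "l \<in> X" "\<forall>c. (c, l) \<notin> A"
    and W: "(u, W) \<in> E_T (X - {l}) (Restr A (X - {l})) Z D f"
    and T: "openin (top_of_set Z) T" "T \<noteq> {}"
    and succ: "\<And>q. (l, q) \<in> A \<Longrightarrow> T \<subseteq> D (u l) \<and> W q \<subseteq> f (u l) ` T"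
  shows "(u, W(l := pullback_at A f u W l T)) \<in> E_T X A Z D f"
proof -
  let ?P = "pullback_at A f u W l T"
  have sv: "single_valued A" using fo by (simp add: forest_def)
  have q_in: "q \<in> X - {l}" if "(l, q) \<in> A" for q
    using forest_edge_in[OF fo that] by blast
  have W_open: "openin (top_of_set Z) (W x) \<and> W x \<noteq> {}" if "x \<in> X - {l}" for x
    using E_T_vertex[OF W that] .
  have image: "f (u l) ` ?P = W q" if q: "(l, q) \<in> A" for q
  proof
    show "f (u l) ` ?P \<subseteq> W q"
      using q by (auto simp: pullback_at_def)
    show "W q \<subseteq> f (u l) ` ?P"
      using succ[OF q] by (force simp: pullback_at_successor[OF sv q])
  qed
  have "openin (top_of_set Z) ?P"
    using openin_pullback_at[OF sv T(1)] succ W_open q_in by blast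
  moreover have "?P \<noteq> {}"
  proof (cases "\<exists>q. (l, q) \<in> A")
    case True
    then obtain q where "(l, q) \<in> A" by blast
    then show ?thesis using image W_open q_in by fastforce
  qed (use T(2) in \<open>simp add: pullback_at_no_successor\<close>)
  ultimately have vertices: "\<forall>x\<in>X. openin (top_of_set Z) ((W(l := ?P)) x) \<and> (W(l := ?P)) x \<noteq> {}"
    using W_open by auto
  have edges: "(W(l := ?P)) x \<subseteq> D (u x) \<and> (W(l := ?P)) y = f (u x) ` (W(l := ?P)) x"
    if xy: "(x, y) \<in> A" for x y
  proof (cases "x = l")
    case True
    have "?P \<subseteq> D (u l)" using succ[OF xy[unfolded True]] by (auto simp: pullback_at_def)
    then show ?thesis
      using True xy image l(2) by auto
  next
    case False
    then have "(x, y) \<in> Restr A (X - {l})"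
      using xy forest_edge_in[OF fo xy] l(2) by blast
    then show ?thesis using False l(2) xy E_T_edge[OF W] by auto
  qed
  show ?thesis
    unfolding E_T_def using vertices edges by blast
qed

lemma U_T_exact_refinement:
  assumes "forest X A" "(u, V) \<in> U_T X A Z D f"
  shows "\<exists>W. (u, W) \<in> E_T X A Z D f \<and> (\<forall>x\<in>X. W x \<subseteq> V x)"
  using assms
proof (induction X A rule: forest_leaf_induct)
  case empty
  show ?case by (rule exI[of _ V]) (simp add: E_T_def)
next
  case (leaf X A l)
  obtain W where W: "(u, W) \<in> E_T (X - {l}) (Restr A (X - {l})) Z D f"
    and W_V: "\<forall>x\<in>X - {l}. W x \<subseteq> V x"
    using leaf.IH U_T_subgraph[OF leaf.prems] by blast
  have "(u, W(l := pullback_at A f u W l (V l))) \<in> E_T X A Z D f"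
  proof (rule E_T_extend_at_leaf[OF leaf.hyps(1-3) W])
    show "openin (top_of_set Z) (V l)" "V l \<noteq> {}"
      using U_T_vertex[OF leaf.prems leaf.hyps(2)] by auto
  next
    fix q assume q: "(l, q) \<in> A"
    have "W q \<subseteq> V q" using W_V forest_edge_in[OF leaf.hyps(1) q] by blast
    then show "V l \<subseteq> D (u l) \<and> W q \<subseteq> f (u l) ` V l"
      using U_T_edge[OF leaf.prems q] by blast
  qed
  moreover have "\<forall>x\<in>X. (W(l := pullback_at A f u W l (V l))) x \<subseteq> V x"
    using W_V by (auto simp: pullback_at_def)
  ultimately show ?case by blast
qed

lemma E_T_extend_within_at_leaf:
  assumes fo: "forest X A" and l: "l \<in> X" "\<forall>c. (c, l) \<notin> A"
    and W: "(u, W) \<in> E_T X A Z D f"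
    and W': "(u, W') \<in> E_T (X - {l}) (Restr A (X - {l})) Z D f" "\<forall>x\<in>X - {l}. W' x \<subseteq> W x"
    and T: "openin (top_of_set Z) T" "T \<noteq> {}" "T \<subseteq> W l"
    and succ: "\<And>q. (l, q) \<in> A \<Longrightarrow> W' q \<subseteq> f (u l) ` T"
  shows "(u, W'(l := pullback_at A f u W' l T)) \<in> E_T X A Z D f \<and>
    (\<forall>x\<in>X. (W'(l := pullback_at A f u W' l T)) x \<subseteq> W x) \<and> pullback_at A f u W' l T \<subseteq> T"
proof -
  have "T \<subseteq> D (u l)" if "(l, q) \<in> A" for q
    using T(3) E_T_edge[OF W that] by blast
  then have "(u, W'(l := pullback_at A f u W' l T)) \<in> E_T X A Z D f"
    using E_T_extend_at_leaf[OF fo l W'(1) T(1,2)] succ by blast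
  moreover have "pullback_at A f u W' l T \<subseteq> T" by (auto simp: pullback_at_def)
  ultimately show ?thesis using W'(2) T(3) by auto
qed

lemma E_T_shrink_at:
  assumes "forest X A" "(u, W) \<in> E_T X A Z D f" "y \<in> X"
    and "openin (top_of_set Z) S" "S \<noteq> {}" "S \<subseteq> W y"
  shows "\<exists>W'. (u, W') \<in> E_T X A Z D f \<and> (\<forall>x\<in>X. W' x \<subseteq> W x) \<and> W' y \<subseteq> S"
  using assms
proof (induction X A arbitrary: y S rule: forest_leaf_induct)
  case empty
  then show ?case by simp
next
  case (leaf X A l)
  note extend = E_T_extend_within_at_leaf[OF leaf.hyps(1-3) leaf.prems(1)]
  have W_sub: "(u, W) \<in> E_T (X - {l}) (Restr A (X - {l})) Z D f"
    using E_T_subgraph[OF leaf.prems(1)] by blast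
  consider (other) "y \<noteq> l" | (successor) q where "y = l" "(l, q) \<in> A" | (root) "y = l" "\<forall>q. (l, q) \<notin> A"
    by blast
  then show ?case
  proof cases
    case other
    then obtain W' where W': "(u, W') \<in> E_T (X - {l}) (Restr A (X - {l})) Z D f"
        "\<forall>x\<in>X - {l}. W' x \<subseteq> W x" "W' y \<subseteq> S"
      using leaf.IH[OF W_sub] leaf.prems(2-5) by blast
    have "W' q \<subseteq> f (u l) ` W l" if "(l, q) \<in> A" for q
      using W'(2) E_T_edge[OF leaf.prems(1) that] forest_edge_in[OF leaf.hyps(1) that] by blast
    then show ?thesis
      using extend[OF W'(1,2) _ _ order_refl] E_T_vertex[OF leaf.prems(1) leaf.hyps(2)] W'(3) other
      by (metis fun_upd_other)
  next
    case successor
    have q_in: "q \<in> X - {l}" using forest_edge_in[OF leaf.hyps(1) successor(2)] by blast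
    have S_D: "S \<subseteq> D (u l)" and image_sub: "f (u l) ` S \<subseteq> W q"
      using leaf.prems(5) E_T_edge[OF leaf.prems(1) successor(2)] successor(1) by blast+
    have "f (u l) ` S \<noteq> {}" using leaf.prems(4) by blast
    then obtain W' where W': "(u, W') \<in> E_T (X - {l}) (Restr A (X - {l})) Z D f"
        "\<forall>x\<in>X - {l}. W' x \<subseteq> W x" "W' q \<subseteq> f (u l) ` S"
      using leaf.IH[OF W_sub q_in openin_image[OF leaf.prems(3) S_D] _ image_sub] by blast
    have "q' = q" if "(l, q') \<in> A" for q'
      using leaf.hyps(1) successor(2) that single_valuedD by (fastforce simp: forest_def)
    then show ?thesis
      using extend[OF W'(1,2) leaf.prems(3,4)] leaf.prems(5) W'(3) successor(1)
      by (metis fun_upd_same)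
  next
    case root
    have "S \<subseteq> W l" "\<forall>x\<in>X - {l}. W x \<subseteq> W x" using leaf.prems(5) root(1) by auto
    then show ?thesis
      using extend[OF W_sub _ leaf.prems(3,4)] root by (metis fun_upd_same)
  qed
qed

lemma clopen_E_T_around_thread:
  assumes "forest X A" "top_of_set Z dim_le 0"
    and "\<And>x. x \<in> X \<Longrightarrow> openin (top_of_set Z) (N x) \<and> z x \<in> N x"
    and "\<And>x y. (x, y) \<in> A \<Longrightarrow> z x \<in> D (u x) \<and> f (u x) (z x) = z y"
  shows "\<exists>W. (u, W) \<in> E_T X A Z D f \<and>
           (\<forall>x\<in>X. clopenin (top_of_set Z) (W x) \<and> z x \<in> W x \<and> W x \<subseteq> N x)"
  using assms(1,3,4)
proof (induction X A arbitrary: N rule: forest_leaf_induct)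
  case empty
  show ?case by (rule exI[of _ N]) (simp add: E_T_def)
next
  case (leaf X A l)
  have sv: "single_valued A" using leaf.hyps(1) by (simp add: forest_def)
  have q_in: "q \<in> X - {l}" if "(l, q) \<in> A" for q
    using forest_edge_in[OF leaf.hyps(1) that] by blast
  let ?G = "N l \<inter> \<Inter>{D (u l) |q. (l, q) \<in> A}"
  have "openin (top_of_set Z) ?G"
    using leaf.prems(1)[OF leaf.hyps(2)] clopen_domain
    by (intro openin_Int_Inter) (auto simp: clopenin_def intro: finite_subset[of _ "{D (u l)}"])
  moreover have "z l \<in> ?G" using leaf.prems leaf.hyps(2) by blast
  ultimately obtain P where P: "closedin (top_of_set Z) P" "openin (top_of_set Z) P"
      "z l \<in> P" "P \<subseteq> ?G"
    by (rule dim_le_0_clopen_neighbourhood[OF assms(2)])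
  have P_D: "P \<subseteq> D (u l)" if "(l, q) \<in> A" for q using P(4) that by blast
  define N' where "N' x = (if (l, x) \<in> A then N x \<inter> f (u l) ` P else N x)" for x
  have "openin (top_of_set Z) (N' x) \<and> z x \<in> N' x" if x: "x \<in> X - {l}" for x
  proof (cases "(l, x) \<in> A")
    case True
    have "openin (top_of_set Z) (f (u l) ` P)" by (rule openin_image[OF P(2) P_D[OF True]])
    moreover have "z x \<in> f (u l) ` P" using leaf.prems(2)[OF True] P(3) by (metis imageI)
    ultimately show ?thesis using leaf.prems(1) x True by (simp add: N'_def openin_Int)
  qed (use leaf.prems(1) x in \<open>simp add: N'_def\<close>)
  then obtain W where W: "(u, W) \<in> E_T (X - {l}) (Restr A (X - {l})) Z D f"
    and W_clopen: "\<And>x. x \<in> X - {l} \<Longrightarrow>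
        clopenin (top_of_set Z) (W x) \<and> z x \<in> W x \<and> W x \<subseteq> N' x"
    using leaf.IH[of N'] leaf.prems(2) by force
  have succ: "P \<subseteq> D (u l) \<and> W q \<subseteq> f (u l) ` P" if q: "(l, q) \<in> A" for q
    using P_D[OF q] W_clopen[OF q_in[OF q]] q by (auto simp: N'_def)
  let ?W = "W(l := pullback_at A f u W l P)"
  have W'_E: "(u, ?W) \<in> E_T X A Z D f"
    using E_T_extend_at_leaf[OF leaf.hyps W P(2)] P(3) succ by blast
  have "closedin (top_of_set Z) (pullback_at A f u W l P)"
    using closedin_pullback_at[OF sv P(1)] P_D W_clopen q_in by (metis clopenin_def)
  moreover have "z l \<in> pullback_at A f u W l P"
    using P(3) W_clopen q_in leaf.prems(2) by (simp add: pullback_at_def)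
  moreover have "pullback_at A f u W l P \<subseteq> N l" using P(4) by (auto simp: pullback_at_def)
  moreover have "W x \<subseteq> N x" if "x \<in> X - {l}" for x
    using W_clopen[OF that] by (auto simp: N'_def split: if_splits)
  ultimately have "\<forall>x\<in>X. clopenin (top_of_set Z) (?W x) \<and> z x \<in> ?W x \<and> ?W x \<subseteq> N x"
    using W_clopen E_T_vertex[OF W'_E] by (simp add: clopenin_def)
  then show ?case using W'_E by blast
qed


lemma small_disjoint_clopen_E_T_around_thread:
  assumes fo: "forest X A" and zd: "top_of_set Z dim_le 0"
    and W0: "(u, W0) \<in> E_T X A Z D f" and z: "thread X A f u W0 z" "inj_on z X"
    and "e > 0"
  shows "\<exists>W. (u, W) \<in> E_T X A Z D f \<and>
           (\<forall>x\<in>X. W x \<subseteq> W0 x \<and> clopenin (top_of_set Z) (W x) \<and>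
                  (\<forall>p\<in>W x. \<forall>q\<in>W x. dist p q < e)) \<and>
           (\<forall>x\<in>X. \<forall>y\<in>X. x \<noteq> y \<longrightarrow> W x \<inter> W y = {})"
proof -
  have "finite (z ` X)" using fo by (simp add: forest_def)
  then obtain \<delta> where \<delta>: "\<delta> > 0"
    "\<And>b b'. b \<in> z ` X \<Longrightarrow> b' \<in> z ` X \<Longrightarrow> b \<noteq> b' \<Longrightarrow> ball b \<delta> \<inter> ball b' \<delta> = {}"
    using finite_disjoint_balls by blast
  define \<epsilon> where "\<epsilon> = min \<delta> (e / 2)"
  have "\<epsilon> > 0" using \<delta>(1) assms(6) by (simp add: \<epsilon>_def)
  then have N: "openin (top_of_set Z) (W0 x \<inter> ball (z x) \<epsilon>) \<and> z x \<in> W0 x \<inter> ball (z x) \<epsilon>"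
    if "x \<in> X" for x
    using E_T_vertex[OF W0 that] z(1) that by (auto simp: thread_def openin_Int_open)
  have z_edge: "z x \<in> D (u x) \<and> f (u x) (z x) = z y" if "(x, y) \<in> A" for x y
    using z(1) E_T_edge[OF W0 that] forest_edge_in[OF fo that] that by (auto simp: thread_def)
  obtain W where W: "(u, W) \<in> E_T X A Z D f"
    and W_ball: "\<forall>x\<in>X. clopenin (top_of_set Z) (W x) \<and> z x \<in> W x \<and> W x \<subseteq> W0 x \<inter> ball (z x) \<epsilon>"
    using clopen_E_T_around_thread[where N = "\<lambda>x. W0 x \<inter> ball (z x) \<epsilon>", OF fo zd N z_edge]
    by blast
  have "dist p q < e" if "x \<in> X" "p \<in> W x" "q \<in> W x" for x p q
  proof -
    have "p \<in> ball (z x) \<epsilon>" "q \<in> ball (z x) \<epsilon>" using W_ball that by blast+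
    then have "dist (z x) p < \<epsilon>" "dist (z x) q < \<epsilon>" by auto
    then show ?thesis using dist_triangle3[of p q "z x"] by (simp add: \<epsilon>_def)
  qed
  moreover have "W x \<inter> W y = {}" if "x \<in> X" "y \<in> X" "x \<noteq> y" for x y
  proof -
    have "ball (z x) \<epsilon> \<subseteq> ball (z x) \<delta>" "ball (z y) \<epsilon> \<subseteq> ball (z y) \<delta>" by (auto simp: \<epsilon>_def)
    moreover have "z x \<noteq> z y" using z(2) that by (auto dest: inj_onD)
    ultimately show ?thesis using W_ball \<delta>(2)[OF imageI imageI] that by blast
  qed
  ultimately show ?thesis using W W_ball by blast
qed
end

locale nowhere_countable_to_one_maps = open_partial_maps +
  assumes infinite_openin: "openin (top_of_set Z) S \<Longrightarrow> S \<noteq> {} \<Longrightarrow> infinite S"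
    and uncountable_fibre:
      "openin (top_of_set Z) S \<Longrightarrow> S \<noteq> {} \<Longrightarrow> S \<subseteq> D n \<Longrightarrow> \<exists>w. uncountable {a \<in> S. f n a = w}"
begin

lemma open_set_with_many_preimages:
  assumes N: "openin (top_of_set Z) N" "N \<noteq> {}" "N \<subseteq> D n"
  obtains S where "openin (top_of_set Z) S" "S \<noteq> {}" "S \<subseteq> f n ` N"
    and "\<And>w. w \<in> S \<Longrightarrow> \<exists>T\<subseteq>N. finite T \<and> card T = k \<and> (\<forall>a\<in>T. f n a = w)"
proof -
  obtain w0 where w0: "uncountable {a \<in> N. f n a = w0}"
    using uncountable_fibre[OF N] by blast
  then have fibre: "infinite {a \<in> N. f n a = w0}" using countable_finite by blast
  then obtain B where B: "finite B" "card B = k" "B \<subseteq> {a \<in> N. f n a = w0}"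
    by (meson infinite_arbitrarily_large)
  obtain \<delta> where \<delta>: "\<delta> > 0" "\<And>b b'. b \<in> B \<Longrightarrow> b' \<in> B \<Longrightarrow> b \<noteq> b' \<Longrightarrow> ball b \<delta> \<inter> ball b' \<delta> = {}"
    using finite_disjoint_balls[OF B(1)] by blast
  (* A point of S has a preimage near each of the k points of B, and these preimages are
     distinct because the balls are disjoint. *)
  define S where "S = f n ` N \<inter> \<Inter>((\<lambda>b. f n ` (N \<inter> ball b \<delta>)) ` B)"
  have "openin (top_of_set Z) (f n ` (N \<inter> ball b \<delta>))" for b
    using openin_Int_open[OF N(1) open_ball] N(3) by (intro openin_image) auto
  then have "openin (top_of_set Z) S"
    unfolding S_def using B(1) openin_image[OF N(1,3)] by (intro openin_Int_Inter) auto
  moreover have "w0 \<in> S"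
  proof -
    obtain a where "a \<in> N" "f n a = w0" using infinite_imp_nonempty[OF fibre] by blast
    moreover have "w0 \<in> f n ` (N \<inter> ball b \<delta>)" if "b \<in> B" for b
      using B(3) \<delta>(1) that by force
    ultimately show ?thesis unfolding S_def by blast
  qed
  moreover have "\<exists>T\<subseteq>N. finite T \<and> card T = k \<and> (\<forall>a\<in>T. f n a = w)" if w: "w \<in> S" for w
  proof -
    have "w \<in> f n ` (N \<inter> ball b \<delta>)" if "b \<in> B" for b using w that by (simp add: S_def)
    then have "\<forall>b\<in>B. \<exists>a. a \<in> N \<inter> ball b \<delta> \<and> f n a = w" by (metis imageE)
    then obtain g where g: "\<And>b. b \<in> B \<Longrightarrow> g b \<in> N \<inter> ball b \<delta> \<and> f n (g b) = w" by metis
    have "inj_on g B"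
    proof (rule inj_onI, rule ccontr)
      fix b b' assume "b \<in> B" "b' \<in> B" "g b = g b'" "b \<noteq> b'"
      then show False using g \<delta>(2) by (metis IntD2 IntI empty_iff)
    qed
    then show ?thesis using g B(1,2) by (intro exI[of _ "g ` B"]) (auto simp: card_image)
  qed
  moreover have "S \<subseteq> f n ` N" unfolding S_def by blast
  ultimately show thesis using that by blast
qed

lemma E_T_injective_thread:
  assumes "forest X A" "(u, W) \<in> E_T X A Z D f" "finite F"
  shows "\<exists>z. thread X A f u W z \<and> inj_on z X \<and> z ` X \<inter> F = {}"
  using assms(1,2)
proof (induction X A arbitrary: W rule: forest_leaf_induct)
  case empty
  show ?case by (simp add: thread_def)
next
  case (leaf X A l)
  let ?X = "X - {l}" and ?A = "Restr A (X - {l})"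
  let ?k = "Suc (card F + card ?X)"
  have W_l: "openin (top_of_set Z) (W l)" "W l \<noteq> {}"
    using E_T_vertex[OF leaf.prems leaf.hyps(2)] by auto
  obtain z T where z: "thread ?X ?A f u W z" "inj_on z ?X" "z ` ?X \<inter> F = {}"
    and T: "finite T" "card T = ?k" "T \<subseteq> W l"
    and T_succ: "\<And>a q. a \<in> T \<Longrightarrow> (l, q) \<in> A \<Longrightarrow> f (u l) a = z q"
  proof (cases "\<exists>y. (l, y) \<in> A")
    case True
    then obtain y where y: "(l, y) \<in> A" by blast
    have y_in: "y \<in> ?X" using forest_edge_in[OF leaf.hyps(1) y] by blast
    have W_edge: "W l \<subseteq> D (u l)" "W y = f (u l) ` W l" using E_T_edge[OF leaf.prems y] by auto
    obtain S where S: "openin (top_of_set Z) S" "S \<noteq> {}" "S \<subseteq> W y"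
      and many: "\<And>w. w \<in> S \<Longrightarrow> \<exists>T\<subseteq>W l. finite T \<and> card T = ?k \<and> (\<forall>a\<in>T. f (u l) a = w)"
      using open_set_with_many_preimages[OF W_l W_edge(1)] W_edge(2) by metis
    (* Forcing the value at y into S leaves more candidates at l than values to avoid. *)
    obtain W' where W': "(u, W') \<in> E_T ?X ?A Z D f" "\<forall>x\<in>?X. W' x \<subseteq> W x" "W' y \<subseteq> S"
      using E_T_shrink_at[OF forest_remove_vertex[OF leaf.hyps(1)] E_T_subgraph[OF leaf.prems]
          y_in S] by blast
    obtain z where z: "thread ?X ?A f u W' z" "inj_on z ?X" "z ` ?X \<inter> F = {}"
      using leaf.IH[OF W'(1)] by blast
    have "z y \<in> S" using z(1) y_in W'(3) by (auto simp: thread_def)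
    then obtain T where "T \<subseteq> W l" "finite T" "card T = ?k" "\<forall>a\<in>T. f (u l) a = z y"
      using many by blast
    moreover have "q = y" if "(l, q) \<in> A" for q
      using leaf.hyps(1) y that single_valuedD by (fastforce simp: forest_def)
    moreover have "thread ?X ?A f u W z" using thread_mono[OF z(1)] W'(2) by blast
    ultimately show thesis using that z(2,3) by blast
  next
    case False
    obtain z where z: "thread ?X ?A f u W z" "inj_on z ?X" "z ` ?X \<inter> F = {}"
      using leaf.IH[OF E_T_subgraph[OF leaf.prems]] by blast
    obtain T where "finite T" "card T = ?k" "T \<subseteq> W l"
      using infinite_arbitrarily_large[OF infinite_openin[OF W_l]] by blast
    then show thesis using that[OF z] False by blast
  qed
  have "finite ?X" using leaf.hyps(1) by (simp add: forest_def)
  then obtain a where a: "a \<in> T" "a \<notin> F" "a \<notin> z ` ?X"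
    using card_outside_union_image[OF assms(3)] T(2) by (metis lessI)
  show ?case
    using injective_thread_extend_at_leaf[OF leaf.hyps z _ a(2,3)] a(1) T(3) T_succ by blast
qed

end

lemma strongly_complex_situation_imp_maps:
  assumes "strongly_complex_situation Z D f"
  shows "nowhere_countable_to_one_maps Z D f"
proof unfold_locales
  fix n
  show "clopenin (top_of_set Z) (D n)"
    and "continuous_map (subtopology (top_of_set Z) (D n)) (top_of_set Z) (f n)"
    and "open_map (subtopology (top_of_set Z) (D n)) (top_of_set Z) (f n)"
    using assms by (simp_all add: strongly_complex_situation_def)
next
  fix S assume "openin (top_of_set Z) S" "S \<noteq> {}"
  moreover have "Hausdorff_space (top_of_set Z)" by (simp add: Hausdorff_space_subtopology)
  ultimately show "infinite S"
    using assms perfect_openin_infinite[of "top_of_set Z"]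
    by (simp add: strongly_complex_situation_def)
next
  fix S n assume "openin (top_of_set Z) S" "S \<noteq> {}" "S \<subseteq> D n"
  then show "\<exists>w. uncountable {a \<in> S. f n a = w}"
    using assms by (simp add: strongly_complex_situation_def)
qed

theorem lemma4p7:
  fixes X :: "'b set" and A :: "('b \<times> 'b) set"
    and Z :: "'a::metric_space set" and D :: "nat \<Rightarrow> 'a set" and f :: "nat \<Rightarrow> 'a \<Rightarrow> 'a"
    and d :: nat and u :: "'b \<Rightarrow> nat" and V :: "'b \<Rightarrow> 'a set"
  assumes "mapping_tuple X A Z D f"
    and "(u, V) \<in> U_T X A Z D f"
  shows "\<exists>W :: 'b \<Rightarrow> 'a set.
           (u, W) \<in> E_T X A Z D f \<and>
           (\<forall>x\<in>X. W x \<subseteq> V x \<and> clopenin (top_of_set Z) (W x) \<and>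
                  (\<forall>p\<in>W x. \<forall>q\<in>W x. dist p q \<le> (1/2) ^ d)) \<and>
           (\<forall>x\<in>X. \<forall>y\<in>X. x \<noteq> y \<longrightarrow> W x \<inter> W y = {})"
proof -
  have "finite X" and "uogas X A" and scs: "strongly_complex_situation Z D f"
    using assms(1) by (simp_all add: mapping_tuple_def)
  then have fo: "forest X A" using uogas_imp_forest by blast
  interpret nowhere_countable_to_one_maps Z D f
    using scs by (rule strongly_complex_situation_imp_maps)
  have zd: "top_of_set Z dim_le 0" using scs by (simp add: strongly_complex_situation_def)
  obtain W0 where W0: "(u, W0) \<in> E_T X A Z D f" "\<forall>x\<in>X. W0 x \<subseteq> V x"
    using U_T_exact_refinement[OF fo assms(2)] by blast
  obtain z where z: "thread X A f u W0 z" "inj_on z X"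
    using E_T_injective_thread[OF fo W0(1), of "{}"] by blast
  obtain W where "(u, W) \<in> E_T X A Z D f"
    and W: "\<forall>x\<in>X. W x \<subseteq> W0 x \<and> clopenin (top_of_set Z) (W x) \<and>
                 (\<forall>p\<in>W x. \<forall>q\<in>W x. dist p q < (1/2) ^ d)"
    and "\<forall>x\<in>X. \<forall>y\<in>X. x \<noteq> y \<longrightarrow> W x \<inter> W y = {}"
    using small_disjoint_clopen_E_T_around_thread[OF fo zd W0(1) z, of "(1/2) ^ d"] by auto
  moreover have "\<forall>x\<in>X. W x \<subseteq> V x" using W W0(2) by blast
  ultimately show ?thesis using W by (intro exI[of _ W]) (simp add: less_imp_le)
qed

end
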